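(* Let $T$ be a tree with vertex set $[n]=\{1,\dots,n\}$. Then the number of edges permitted by ${\bf oDFS}(T)$ equals the area $a(T)$.
   Context: Ordered depth-first search. For a connected graph $G$ on $[n]$, ${\bf oDFS}(G)$ is the procedure: set $\mathcal O_0=(1)$ (an ordered list, the "stack") and $\mathcal A_0=\emptyset$. For $i=0,1,\dots,n-1$: let $v_i$ be the first element of $\mathcal O_i$; let $\mathcal N_i$ be the set of neighbours of $v_i$ in $[n]\setminus(\mathcal A_i\cup\mathcal O_i)$; set $\mathcal A_{i+1}=\mathcal A_i\cup\{v_i\}$; form $\mathcal O_{i+1}$ by removing $v_i$ from the front of $\mathcal O_i$ and then placing the elements of $\mathcal N_i$, in increasing order, at the front of the remaining list. The depth-first walk is $X(i)=|\mathcal O_i|-1$ for $0\le i<n$. For a tree $T$ on $[n]$ (running ${\bf oDFS}(T)$), its area is $a(T)=\sum_{i=1}^{n-1}X(i)$. An edge $uv$ not in $T$ is permitted by ${\bf oDFS}(T)$ if there is $i\in\{0,\dots,n-1\}$ with $u,v\in\mathcal O_i$. *)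

theory Defs
  imports Main
begin

definition graph_on :: "nat \<Rightarrow> nat set set \<Rightarrow> bool" where
  "graph_on n E \<longleftrightarrow> (\<forall>e\<in>E. \<exists>u v. e = {u, v} \<and> u \<noteq> v \<and> u \<in> {1..n} \<and> v \<in> {1..n})"

definition adj :: "nat set set \<Rightarrow> nat \<Rightarrow> nat \<Rightarrow> bool" where
  "adj E u v \<longleftrightarrow> {u, v} \<in> E \<and> u \<noteq> v"

definition connected_on :: "nat \<Rightarrow> nat set set \<Rightarrow> bool" where
  "connected_on n E \<longleftrightarrow> (\<forall>u\<in>{1..n}. \<forall>v\<in>{1..n}. (adj E)\<^sup>*\<^sup>* u v)"

text \<open>Acyclic: no edge lies on a cycle, i.e. the endpoints of every edge
  are disconnected once that edge is removed.\<close>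
definition acyclic_graph :: "nat set set \<Rightarrow> bool" where
  "acyclic_graph E \<longleftrightarrow> (\<forall>u v. adj E u v \<longrightarrow> \<not> (adj (E - {{u, v}}))\<^sup>*\<^sup>* u v)"

definition is_tree_on :: "nat \<Rightarrow> nat set set \<Rightarrow> bool" where
  "is_tree_on n E \<longleftrightarrow> n \<ge> 1 \<and> graph_on n E \<and> connected_on n E \<and> acyclic_graph E"

text \<open>One step of oDFS: state is (stack O_i, set A_i).\<close>
definition odfs_step :: "nat \<Rightarrow> nat set set \<Rightarrow> nat list \<times> nat set \<Rightarrow> nat list \<times> nat set" where
  "odfs_step n E st = (let S = fst st; A = snd st; v = hd S;
      N = {u \<in> {1..n}. adj E v u \<and> u \<notin> A \<and> u \<notin> set S}
    in (sorted_list_of_set N @ tl S, A \<union> {v}))"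

definition odfs_state :: "nat \<Rightarrow> nat set set \<Rightarrow> nat \<Rightarrow> nat list \<times> nat set" where
  "odfs_state n E i = (odfs_step n E ^^ i) ([1], {})"

definition odfs_stack :: "nat \<Rightarrow> nat set set \<Rightarrow> nat \<Rightarrow> nat list" where
  "odfs_stack n E i = fst (odfs_state n E i)"

definition dfs_walk :: "nat \<Rightarrow> nat set set \<Rightarrow> nat \<Rightarrow> int" where
  "dfs_walk n E i = int (length (odfs_stack n E i)) - 1"

definition tree_area :: "nat \<Rightarrow> nat set set \<Rightarrow> int" where
  "tree_area n E = (\<Sum>i=1..n-1. dfs_walk n E i)"

definition permitted_edges :: "nat \<Rightarrow> nat set set \<Rightarrow> nat set set" where
  "permitted_edges n E = {{u, v} | u v. u \<in> {1..n} \<and> v \<in> {1..n} \<and> u \<noteq> v \<and> {u, v} \<notin> E \<and>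
      (\<exists>i\<in>{0..n-1}. u \<in> set (odfs_stack n E i) \<and> v \<in> set (odfs_stack n E i))}"

end

theory Submission
  imports Defs
begin

(* Run oDFS on a connected graph on [n] and write v_i = hd O_i for the vertex
   explored at step i.  Every permitted pair {u,w} is of the form {v_i, w} with w
   in the tail of the stack O_i: both endpoints stay on the stack until they are
   explored, and at the step when the earlier one is explored the later one is
   still below it.  Conversely, distinct explored vertices and the fact that an
   explored vertex never returns to the stack make the map (i,w) |-> {v_i, w}
   injective on these pairs.  Hence, in any connected graph, the permitted edges
   are the pairs {v_i,w} that are not edges, and there are sum_i (|O_i| - 1) such
   pairs; this sum is the area since X(0) = 0. *)

lemma adj_sym: "adj E a b \<Longrightarrow> adj E b a"
  unfolding adj_def by (auto simp: insert_commute)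

lemma adj_rtranclp_sym: "(adj E)\<^sup>*\<^sup>* a b \<Longrightarrow> (adj E)\<^sup>*\<^sup>* b a"
  using symp_rtranclp[of "adj E"] adj_sym by (auto intro: sympI dest: sympD)

lemma first_switch:
  assumes "\<not> P i" "P m" "i \<le> m"
  shows "\<exists>j. i \<le> j \<and> j < m \<and> \<not> P j \<and> P (Suc j)"
  using assms
proof (induction m)
  case 0 then show ?case by auto
next
  case (Suc m)
  then show ?case by (cases "P m") (metis le_Suc_eq less_SucI, metis le_Suc_eq lessI)
qed

lemma permitted_edgesI:
  assumes "i \<in> {0..n-1}" "u \<in> set (odfs_stack n E i)" "v \<in> set (odfs_stack n E i)"
    "u \<noteq> v" "{u, v} \<notin> E" "set (odfs_stack n E i) \<subseteq> {1..n}"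
  shows "{u, v} \<in> permitted_edges n E"
  unfolding permitted_edges_def
  by (intro CollectI exI[of _ u] exI[of _ v] conjI bexI[of _ i]) (use assms in auto)

locale odfs_connected =
  fixes n :: nat and E :: "nat set set"
  assumes n_pos: "1 \<le> n"
    and graph: "graph_on n E"
    and connected: "connected_on n E"
begin

abbreviation S :: "nat \<Rightarrow> nat list" where "S i \<equiv> odfs_stack n E i"
abbreviation A :: "nat \<Rightarrow> nat set" where "A i \<equiv> snd (odfs_state n E i)"

definition fresh :: "nat \<Rightarrow> nat set" where
  "fresh i = {u \<in> {1..n}. adj E (hd (S i)) u \<and> u \<notin> A i \<and> u \<notin> set (S i)}"

lemma stack_0: "S 0 = [1]" and explored_0: "A 0 = {}"
  by (auto simp: odfs_stack_def odfs_state_def)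

lemma stack_Suc: "S (Suc i) = sorted_list_of_set (fresh i) @ tl (S i)"
  and explored_Suc: "A (Suc i) = insert (hd (S i)) (A i)"
  by (auto simp: odfs_stack_def odfs_state_def odfs_step_def fresh_def Let_def)

lemma set_stack_Suc: "set (S (Suc i)) = fresh i \<union> set (tl (S i))"
  by (simp add: stack_Suc fresh_def)

lemma explored_mono: "i \<le> j \<Longrightarrow> A i \<subseteq> A j"
  by (induction j rule: dec_induct) (auto simp: explored_Suc)

lemma adj_range: "adj E a u \<Longrightarrow> u \<in> {1..n}"
  using graph unfolding graph_on_def adj_def by (metis doubleton_eq_iff)

definition stack_wf :: "nat \<Rightarrow> bool" where
  "stack_wf i \<longleftrightarrow> distinct (S i) \<and> set (S i) \<inter> A i = {} \<and> set (S i) \<subseteq> {1..n}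
     \<and> A i \<subseteq> {1..n} \<and> card (A i) = i"

definition explored_closed :: "nat \<Rightarrow> bool" where
  "explored_closed i \<longleftrightarrow> 1 \<in> A i \<union> set (S i)
     \<and> (\<forall>a\<in>A i. \<forall>u. adj E a u \<longrightarrow> u \<in> A i \<union> set (S i))"

definition explored_adj :: "nat \<Rightarrow> nat \<Rightarrow> nat \<Rightarrow> bool" where
  "explored_adj i a b \<longleftrightarrow> adj E a b \<and> a \<in> A i"

definition reached :: "nat \<Rightarrow> bool" where
  "reached i \<longleftrightarrow> (\<forall>x\<in>A i \<union> set (S i). (explored_adj i)\<^sup>*\<^sup>* 1 x)"

lemma stack_wf_step:
  assumes wf: "stack_wf i" and nonempty: "S i \<noteq> []"
  shows "stack_wf (Suc i)"
proof -
  obtain v rest where Si: "S i = v # rest"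
    using nonempty by (cases "S i") auto
  have fresh_new: "fresh i \<inter> insert v (A i \<union> set rest) = {}" "fresh i \<subseteq> {1..n}" "finite (fresh i)"
    unfolding fresh_def Si by auto
  have "distinct (v # rest)" "set (v # rest) \<inter> A i = {}" "set (v # rest) \<subseteq> {1..n}"
    "A i \<subseteq> {1..n}" "card (A i) = i"
    using wf unfolding stack_wf_def Si by auto
  moreover have "finite (A i)"
    using \<open>A i \<subseteq> {1..n}\<close> finite_subset by blast
  ultimately show ?thesis
    using fresh_new unfolding stack_wf_def stack_Suc explored_Suc Si by auto
qed

lemma explored_closed_step:
  assumes "explored_closed i" "S i \<noteq> []"
  shows "explored_closed (Suc i)"
proof -
  obtain v rest where Si: "S i = v # rest"
    using assms(2) by (cases "S i") auto
  have "u \<in> A (Suc i) \<union> set (S (Suc i))" if a: "a \<in> A (Suc i)" and au: "adj E a u" for a u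
  proof (cases "a = v")
    case True
    then show ?thesis
      using au adj_range[OF au] by (auto simp: Si explored_Suc set_stack_Suc fresh_def)
  next
    case False
    then have "u \<in> A i \<union> set (v # rest)"
      using a au assms(1) Si by (auto simp: explored_closed_def explored_Suc)
    then show ?thesis by (auto simp: Si explored_Suc set_stack_Suc)
  qed
  moreover have "1 \<in> A (Suc i) \<union> set (S (Suc i))"
    using assms(1) by (auto simp: Si explored_closed_def explored_Suc set_stack_Suc)
  ultimately show ?thesis unfolding explored_closed_def by blast
qed

lemma reached_step:
  assumes "reached i" "S i \<noteq> []"
  shows "reached (Suc i)"
  unfolding reached_def
proof
  fix x assume x: "x \<in> A (Suc i) \<union> set (S (Suc i))"
  have "explored_adj i \<le> explored_adj (Suc i)"
    by (auto simp: explored_adj_def explored_Suc)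
  then have lift: "(explored_adj i)\<^sup>*\<^sup>* 1 y \<Longrightarrow> (explored_adj (Suc i))\<^sup>*\<^sup>* 1 y" for y
    using rtranclp_mono by blast
  have old: "y \<in> A i \<union> set (S i) \<Longrightarrow> (explored_adj (Suc i))\<^sup>*\<^sup>* 1 y" for y
    using assms(1) lift unfolding reached_def by blast
  show "(explored_adj (Suc i))\<^sup>*\<^sup>* 1 x"
  proof (cases "x \<in> fresh i")
    case True
    then have "explored_adj (Suc i) (hd (S i)) x"
      by (simp add: fresh_def explored_adj_def explored_Suc)
    with old[of "hd (S i)"] assms(2) show ?thesis
      by (auto intro: rtranclp.rtrancl_into_rtrancl)
  next
    case False
    with x old assms(2) show ?thesis
      by (auto simp: explored_Suc set_stack_Suc dest: list.set_sel(2))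
  qed
qed

(* While fewer than n vertices are explored the stack is nonempty: otherwise the
   explored set would be closed under adjacency, hence everything by connectivity. *)
lemma stack_nonempty_if:
  assumes "stack_wf i" "explored_closed i" "i < n"
  shows "S i \<noteq> []"
proof
  assume empty: "S i = []"
  have "(adj E)\<^sup>*\<^sup>* 1 v \<Longrightarrow> v \<in> A i" for v
    by (induction rule: rtranclp_induct)
       (use assms(2) empty in \<open>auto simp: explored_closed_def\<close>)
  moreover have "v \<in> {1..n} \<Longrightarrow> (adj E)\<^sup>*\<^sup>* 1 v" for v
    using connected n_pos unfolding connected_on_def by auto
  ultimately have "{1..n} \<subseteq> A i" by blast
  then have "n \<le> card (A i)"
    using assms(1) unfolding stack_wf_def
    by (metis card_atLeastAtMost card_mono diff_Suc_1 finite_subset finite_atLeastAtMost)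
  with assms(1,3) show False unfolding stack_wf_def by simp
qed

lemma invariants: "i \<le> n \<Longrightarrow> stack_wf i \<and> explored_closed i \<and> reached i"
proof (induction i)
  case 0
  show ?case
    using n_pos by (simp add: stack_wf_def explored_closed_def reached_def stack_0 explored_0)
next
  case (Suc i)
  then have "S i \<noteq> []"
    using stack_nonempty_if by auto
  with Suc show ?case
    using stack_wf_step explored_closed_step reached_step by auto
qed

lemma stack_nonempty: "i < n \<Longrightarrow> S i \<noteq> []"
  using invariants stack_nonempty_if by auto

lemma stack_distinct: "i \<le> n \<Longrightarrow> distinct (S i)"
  using invariants unfolding stack_wf_def by auto

lemma stack_unexplored: "i \<le> n \<Longrightarrow> x \<in> set (S i) \<Longrightarrow> x \<notin> A i"
  using invariants unfolding stack_wf_def by auto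

lemma stack_range: "i \<le> n \<Longrightarrow> set (S i) \<subseteq> {1..n}"
  using invariants unfolding stack_wf_def by auto

lemma explored_all: "A n = {1..n}"
  using invariants[of n] unfolding stack_wf_def
  by (metis card_atLeastAtMost card_subset_eq diff_Suc_1 finite_atLeastAtMost order_refl)

lemma explored_off_stack: "i < j \<Longrightarrow> j \<le> n \<Longrightarrow> hd (S i) \<notin> set (S j)"
  using explored_mono[of "Suc i" j] stack_unexplored[of j] by (auto simp: explored_Suc)

lemma heads_distinct: "i < j \<Longrightarrow> j < n \<Longrightarrow> hd (S i) \<noteq> hd (S j)"
  using explored_off_stack[of i j] stack_nonempty[of j] by auto

lemma head_notin_tail: "i \<le> n \<Longrightarrow> hd (S i) \<notin> set (tl (S i))"
  using stack_distinct[of i] by (cases "S i") auto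

lemma stays_until_explored:
  assumes "w \<in> set (S i)"
  shows "i \<le> j \<Longrightarrow> w \<notin> A j \<Longrightarrow> w \<in> set (S j)"
proof (induction j rule: dec_induct)
  case base
  show ?case by (fact assms)
next
  case (step j)
  then have "w \<in> set (S j)" "w \<noteq> hd (S j)"
    using explored_mono[of j "Suc j"] by (auto simp: explored_Suc)
  then show ?case
    by (cases "S j") (auto simp: set_stack_Suc)
qed

lemma explored_later:
  assumes "u \<in> set (S i)" "i \<le> n"
  shows "\<exists>j. i \<le> j \<and> j < n \<and> u = hd (S j) \<and> u \<notin> A j"
proof -
  have "u \<notin> A i"
    using assms stack_unexplored by blast
  moreover have "u \<in> A n"
    using assms stack_range explored_all by blast
  ultimately
  obtain j where "i \<le> j" "j < n" "u \<notin> A j" "u \<in> A (Suc j)"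
    using first_switch[of "\<lambda>k. u \<in> A k" i n] assms(2) by blast
  then show ?thesis by (auto simp: explored_Suc)
qed

definition head_pairs :: "(nat \<times> nat) set" where
  "head_pairs = Sigma {..<n} (\<lambda>i. set (tl (S i)))"

definition pair_edge :: "nat \<times> nat \<Rightarrow> nat set" where
  "pair_edge p = {hd (S (fst p)), snd p}"

lemma head_pairs_on_stack: "(i, w) \<in> head_pairs \<Longrightarrow> i < n \<and> w \<in> set (S i) \<and> w \<noteq> hd (S i)"
  using head_notin_tail[of i] stack_nonempty[of i]
  by (auto simp: head_pairs_def dest: list.set_sel(2))

(* Distinct pairs give distinct edges: the heads v_i are distinct, and if
   {v_i,w} = {v_j,w'} with v_i \<noteq> v_j then v_i would be stacked after its exploration. *)
lemma pair_edge_inj: "inj_on pair_edge head_pairs"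
proof (rule inj_onI, clarify)
  fix i w j w'
  assume p: "(i, w) \<in> head_pairs" "(j, w') \<in> head_pairs" and eq: "pair_edge (i, w) = pair_edge (j, w')"
  note i = head_pairs_on_stack[OF p(1)] and j = head_pairs_on_stack[OF p(2)]
  show "i = j \<and> w = w'"
  proof (cases "hd (S i) = hd (S j)")
    case True
    then have "i = j" using heads_distinct i j by (metis linorder_neqE_nat)
    then show ?thesis using eq by (auto simp: pair_edge_def doubleton_eq_iff)
  next
    case False
    then have "hd (S i) = w'" "w = hd (S j)" using eq by (auto simp: pair_edge_def doubleton_eq_iff)
    then show ?thesis
      using explored_off_stack[of i j] explored_off_stack[of j i] i j by (cases i j rule: linorder_cases) auto
  qed
qed

lemma card_head_pairs: "card head_pairs = (\<Sum>i<n. length (S i) - 1)"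
  unfolding head_pairs_def using stack_distinct
  by (simp add: distinct_card distinct_tl)

(* Two vertices on a common stack: the one explored first has the other below it. *)
lemma stack_pair_covered:
  assumes "i < n" "u \<in> set (S i)" "v \<in> set (S i)" "u \<noteq> v"
  shows "{u, v} \<in> pair_edge ` head_pairs"
proof -
  have key: "{x, y} \<in> pair_edge ` head_pairs"
    if "x \<in> set (S i)" "y \<in> set (S i)" "i \<le> jx" "jx < jy" "jy < n"
      "x = hd (S jx)" "y = hd (S jy)" "y \<notin> A jy" for x y jx jy
  proof -
    have "y \<notin> A jx" using that explored_mono[of jx jy] by auto
    then have "y \<in> set (S jx)" using stays_until_explored that by auto
    moreover have "y \<noteq> x" using heads_distinct[of jx jy] that by auto
    ultimately have "(jx, y) \<in> head_pairs"
      using that by (cases "S jx") (auto simp: head_pairs_def)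
    moreover have "pair_edge (jx, y) = {x, y}" by (simp add: pair_edge_def that(6))
    ultimately show ?thesis by (metis image_eqI)
  qed
  obtain ju where u: "i \<le> ju" "ju < n" "u = hd (S ju)" "u \<notin> A ju"
    using explored_later assms by (metis less_imp_le)
  obtain jv where v: "i \<le> jv" "jv < n" "v = hd (S jv)" "v \<notin> A jv"
    using explored_later assms by (metis less_imp_le)
  have "ju \<noteq> jv" using u v assms(4) by auto
  then consider "ju < jv" | "jv < ju" by linarith
  then show ?thesis
  proof cases
    case 1
    show ?thesis using key[OF assms(2,3) u(1) 1 v(2) u(3) v(3,4)] .
  next
    case 2
    show ?thesis using key[OF assms(3,2) v(1) 2 u(2) v(3) u(3,4)] by (simp add: insert_commute)
  qed
qed

lemma permitted_edges_eq: "permitted_edges n E = pair_edge ` head_pairs - E"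
proof
  show "permitted_edges n E \<subseteq> pair_edge ` head_pairs - E"
  proof
    fix e assume "e \<in> permitted_edges n E"
    then obtain u v i where e: "e = {u, v}" "u \<noteq> v" "e \<notin> E" and "i \<in> {0..n-1}"
      and on_stack: "u \<in> set (S i)" "v \<in> set (S i)"
      unfolding permitted_edges_def by auto
    then have "i < n" using n_pos by auto
    then show "e \<in> pair_edge ` head_pairs - E"
      using stack_pair_covered[OF _ on_stack e(2)] e by simp
  qed
next
  show "pair_edge ` head_pairs - E \<subseteq> permitted_edges n E"
  proof clarify
    fix i w assume p: "(i, w) \<in> head_pairs" and non_edge: "pair_edge (i, w) \<notin> E"
    note on_stack = head_pairs_on_stack[OF p]
    have "hd (S i) \<in> set (S i)"
      using on_stack stack_nonempty by auto
    moreover have "set (S i) \<subseteq> {1..n}" "i \<in> {0..n-1}"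
      using on_stack stack_range by auto
    ultimately show "pair_edge (i, w) \<in> permitted_edges n E"
      using on_stack non_edge permitted_edgesI[of i n "hd (S i)" E w]
      by (auto simp: pair_edge_def)
  qed
qed

(* The area sums X(i) over 1 \<le> i < n; the term X(0) = 0 may be added freely. *)
lemma area_eq: "tree_area n E = (\<Sum>i<n. int (length (S i) - 1))"
proof -
  have "(\<Sum>i<n. int (length (S i) - 1)) = (\<Sum>i\<in>insert 0 {1..n-1}. int (length (S i) - 1))"
    using n_pos by (intro sum.cong) auto
  also have "\<dots> = (\<Sum>i=1..n-1. int (length (S i) - 1))"
    by (simp add: stack_0)
  also have "\<dots> = (\<Sum>i=1..n-1. int (length (S i)) - 1)"
  proof (rule sum.cong)
    fix i assume "i \<in> {1..n-1}"
    then have "i < n" using n_pos by auto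
    then have "S i \<noteq> []" by (rule stack_nonempty)
    then show "int (length (S i) - 1) = int (length (S i)) - 1" by (cases "S i") auto
  qed simp
  finally show ?thesis unfolding tree_area_def dfs_walk_def by simp
qed

end

locale odfs_tree = odfs_connected +
  assumes acyclic: "acyclic_graph E"
begin

(* Vertices on a common stack are non-adjacent: both are reached from the root by
   paths avoiding the edge between them, which would then lie on a cycle. *)
lemma stack_independent:
  assumes "i \<le> n" "u \<in> set (S i)" "w \<in> set (S i)" "u \<noteq> w"
  shows "{u, w} \<notin> E"
proof
  assume edge: "{u, w} \<in> E"
  have "explored_adj i \<le> adj (E - {{u, w}})"
    using stack_unexplored[OF assms(1)] assms(2,3)
    by (auto simp: explored_adj_def adj_def doubleton_eq_iff)
  then have "(adj (E - {{u, w}}))\<^sup>*\<^sup>* 1 x" if "x \<in> set (S i)" for x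
    using invariants[OF assms(1)] that rtranclp_mono unfolding reached_def by blast
  then have "(adj (E - {{u, w}}))\<^sup>*\<^sup>* u w"
    using assms(2,3) adj_rtranclp_sym rtranclp_trans by metis
  moreover have "adj E u w" using edge assms(4) by (simp add: adj_def)
  ultimately show False using acyclic unfolding acyclic_graph_def by blast
qed

lemma permitted_edges_tree: "permitted_edges n E = pair_edge ` head_pairs"
proof -
  have "pair_edge (i, w) \<notin> E" if "(i, w) \<in> head_pairs" for i w
  proof -
    note on_stack = head_pairs_on_stack[OF that]
    then have "hd (S i) \<in> set (S i)"
      using stack_nonempty by auto
    with on_stack show ?thesis
      using stack_independent[of i "hd (S i)" w] by (auto simp: pair_edge_def)
  qed
  then show ?thesis
    using permitted_edges_eq by auto
qed

lemma card_permitted_edges: "int (card (permitted_edges n E)) = tree_area n E"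
proof -
  have "card (permitted_edges n E) = (\<Sum>i<n. length (S i) - 1)"
    using permitted_edges_tree pair_edge_inj card_head_pairs by (simp add: card_image)
  then show ?thesis using area_eq by simp
qed

end

theorem lemma1:
  fixes n :: nat and T :: "nat set set"
  assumes "is_tree_on n T"
  shows "int (card (permitted_edges n T)) = tree_area n T"
proof -
  interpret odfs_tree n T
    using assms unfolding is_tree_on_def by unfold_locales auto
  show ?thesis by (rule card_permitted_edges)
qed

end
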